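(* Let $(M,d,+)$ be a metric semigroup, $f:I_a^b\to M$, $0\ne\alpha\le1$, and $x,y\in I_a^b$ with $x\le y$. Then $$\mathrm{md}_{|\alpha|}(f_\alpha^x,I_x^y\lfloor\alpha)\le\sum_{\beta\in\mathbb N_0^n,\ \alpha\le\beta\le1}\mathrm{md}_{|\beta|}\big(f_\beta^a,I_{a+\alpha(x-a)}^{x+\alpha(y-x)}\lfloor\beta\big).$$
   Context: Fix $n\in\mathbb N$ and $a,b\in\mathbb R^n$ with $a<b$. Inequalities between points of $\mathbb R^n$ or multiindices are componentwise ($x\le y$ means $x_i\le y_i$ for all $i$; $x<y$ means $x_i<y_i$ for all $i$). For $x\le y$, $I_x^y=\prod_{i=1}^n[x_i,y_i]$. For $\theta\in\mathbb N_0^n$ and $x\in\mathbb R^n$, $\theta x=(\theta_1x_1,\dots,\theta_nx_n)$ and $|\theta|=\theta_1+\dots+\theta_n$; $0$ and $1$ denote $(0,\dots,0)$ and $(1,\dots,1)$. A multiindex $\theta$ with $0\le\theta\le1$ is even (odd) if $|\theta|$ is even (odd); $\mathcal E(n)$ and $\mathcal O(n)$ are the sets of even and odd $\theta\le1$. A metric semigroup $(M,d,+)$ is a metric space $(M,d)$ with an Abelian semigroup operation $+$ such that $d(u+w,v+w)=d(u,v)$ for all $u,v,w\in M$. For $f:I_a^b\to M$ and $x\le y$ in $I_a^b$, $\mathrm{md}_n(f,I_x^y)=d\big(\sum_{\theta\in\mathcal E(n)}f(x+\theta(y-x)),\sum_{\eta\in\mathcal O(n)}f(x+\eta(y-x))\big)$.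 For $0\ne\alpha\le1$ ($\alpha\in\mathbb N_0^n$) and $x\in\mathbb R^n$ let $x\lfloor\alpha=(x_i:\alpha_i=1)\in\mathbb R^{|\alpha|}$ and $I_x^y\lfloor\alpha=I_{x\lfloor\alpha}^{y\lfloor\alpha}$. For $z\in I_a^b$ the truncated map $f_\alpha^z:I_a^b\lfloor\alpha\to M$ is $f_\alpha^z(x\lfloor\alpha)=f(z+\alpha(x-z))$, $x\in I_a^b$. The quantity $\mathrm{md}_{|\alpha|}(f_\alpha^z,I_x^y\lfloor\alpha)$ is $\mathrm{md}_{|\alpha|}$ (the formula above in dimension $|\alpha|$) for the map $f_\alpha^z$ on the rectangle $I_{x\lfloor\alpha}^{y\lfloor\alpha}\subset\mathbb R^{|\alpha|}$. *)

theory Defs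
  imports Complex_Main "HOL-Library.FuncSet"
begin

definition metric_semigroup :: "('m \<Rightarrow> 'm \<Rightarrow> real) \<Rightarrow> ('m \<Rightarrow> 'm \<Rightarrow> 'm) \<Rightarrow> bool" where
  "metric_semigroup d add \<longleftrightarrow>
     (\<forall>u v. 0 \<le> d u v) \<and> (\<forall>u v. d u v = 0 \<longleftrightarrow> u = v) \<and> (\<forall>u v. d u v = d v u) \<and>
     (\<forall>u v w. d u w \<le> d u v + d v w) \<and>
     (\<forall>u v w. add (add u v) w = add u (add v w)) \<and> (\<forall>u v. add u v = add v u) \<and>
     (\<forall>u v w. d (add u w) (add v w) = d u v)"

text \<open>Semigroup sum over a finite nonempty index set (no neutral element needed).\<close>
definition sgsum :: "('m \<Rightarrow> 'm \<Rightarrow> 'm) \<Rightarrow> ('a \<Rightarrow> 'm) \<Rightarrow> 'a set \<Rightarrow> 'm" where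
  "sgsum add g S = the (Finite_Set.fold
      (\<lambda>x acc. Some (case acc of None \<Rightarrow> g x | Some s \<Rightarrow> add (g x) s)) None S)"

text \<open>Points of \<real>^S (S a finite index set, e.g. S = {..<n}) are extensional functions on S.
  Rectangle I_x^y over index set S.\<close>
definition rect :: "nat set \<Rightarrow> (nat \<Rightarrow> real) \<Rightarrow> (nat \<Rightarrow> real) \<Rightarrow> (nat \<Rightarrow> real) set" where
  "rect S x y = PiE S (\<lambda>i. {x i..y i})"

text \<open>A multiindex \<theta> \<le> 1 is represented by its support T \<subseteq> S; \<theta> x is then
  (\<lambda>i. of_bool (i \<in> T) * x i), |\<theta>| = card T.  Vertex x + \<theta>(y - x):\<close>
definition vtx :: "nat set \<Rightarrow> nat set \<Rightarrow> (nat \<Rightarrow> real) \<Rightarrow> (nat \<Rightarrow> real) \<Rightarrow> (nat \<Rightarrow> real)" where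
  "vtx S T x y = (\<lambda>i\<in>S. x i + of_bool (i \<in> T) * (y i - x i))"

definition md :: "('m \<Rightarrow> 'm \<Rightarrow> real) \<Rightarrow> ('m \<Rightarrow> 'm \<Rightarrow> 'm) \<Rightarrow> nat set
    \<Rightarrow> ((nat \<Rightarrow> real) \<Rightarrow> 'm) \<Rightarrow> (nat \<Rightarrow> real) \<Rightarrow> (nat \<Rightarrow> real) \<Rightarrow> real" where
  "md d add S g x y =
     d (sgsum add (\<lambda>T. g (vtx S T x y)) {T. T \<subseteq> S \<and> even (card T)})
       (sgsum add (\<lambda>T. g (vtx S T x y)) {T. T \<subseteq> S \<and> odd (card T)})"

text \<open>Truncation x\<lfloor>\<alpha> for \<alpha> with support A: restriction of x to A.\<close>
definition trunc_pt :: "nat set \<Rightarrow> (nat \<Rightarrow> real) \<Rightarrow> (nat \<Rightarrow> real)" where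
  "trunc_pt A x = restrict x A"

text \<open>Truncated map f_\<alpha>^z : I_a^b\<lfloor>\<alpha> \<rightarrow> M, f_\<alpha>^z(x\<lfloor>\<alpha>) = f(z + \<alpha>(x - z)), ambient index set N.\<close>
definition trunc_map :: "nat set \<Rightarrow> ((nat \<Rightarrow> real) \<Rightarrow> 'm) \<Rightarrow> nat set \<Rightarrow> (nat \<Rightarrow> real)
    \<Rightarrow> ((nat \<Rightarrow> real) \<Rightarrow> 'm)" where
  "trunc_map N f A z = (\<lambda>u. f (\<lambda>i\<in>N. z i + of_bool (i \<in> A) * (u i - z i)))"

end

theory Submission imports Defs begin

(* Let N = {..<n} and A' = N - A. For U \<subseteq> A' and a parity q, let P q U be the
   semigroup sum, over the subsets T \<subseteq> A with |T| of parity q, of f evaluated at the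
   "hybrid" point that equals y on T, x on (A - T) \<union> U and a on A' - U.
   (1) The left-hand side md(f_A^x, I_x^y|A) is exactly d(P even A', P odd A').
   (2) For B = A \<union> C with C \<subseteq> A', the B-th summand on the right is d(E C, O C), where
       E C (resp. O C) adds up P even U for even |U| and P odd U for odd |U| (resp. the
       other way round) over all U \<subseteq> C.
   (3) A telescoping inequality valid in every metric semigroup, proved by induction on C0:
       d(e C0, p C0) \<le> \<Sum>_{C \<subseteq> C0} d(E C, O C) for arbitrary families e, p.
   The file first develops the axioms of a metric semigroup and finite semigroup sums
   (through the commutative monoid obtained by adjoining a neutral element None), then
   the telescoping inequality (3), then the bookkeeping (1), (2) in a locale fixing the
   data of the theorem; the theorem follows by combining them. *)

section \<open>Metric semigroups and semigroup sums\<close>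

locale metric_sg =
  fixes d :: "'m \<Rightarrow> 'm \<Rightarrow> real" and add :: "'m \<Rightarrow> 'm \<Rightarrow> 'm"
  assumes metric_semigroup: "metric_semigroup d add"
begin

lemma add_assoc: "add (add u v) w = add u (add v w)"
  and add_comm: "add u v = add v u"
  and d_sym: "d u v = d v u"
  and d_triangle: "d u w \<le> d u v + d v w"
  and d_translate: "d (add u w) (add v w) = d u v"
  using metric_semigroup unfolding metric_semigroup_def by blast+

lemma add_left_commute: "add u (add v w) = add v (add u w)"
  by (metis add_assoc add_comm)

lemma d_add_le: "d (add u w) (add v z) \<le> d u v + d w z"
proof -
  have "d (add u w) (add v z) \<le> d (add u w) (add v w) + d (add v w) (add v z)"
    by (rule d_triangle)
  also have "d (add v w) (add v z) = d w z"
    using d_translate[of w v z] by (simp add: add_comm)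
  finally show ?thesis by (simp add: d_translate)
qed

end

text \<open>Adjoining a neutral element None turns the semigroup into a commutative monoid.\<close>
definition opt_add :: "('m \<Rightarrow> 'm \<Rightarrow> 'm) \<Rightarrow> 'm option \<Rightarrow> 'm option \<Rightarrow> 'm option" where
  "opt_add add p q = (case p of None \<Rightarrow> q
     | Some u \<Rightarrow> (case q of None \<Rightarrow> Some u | Some v \<Rightarrow> Some (add u v)))"

lemma opt_add_Some [simp]: "opt_add add (Some u) (Some v) = Some (add u v)"
  by (simp add: opt_add_def)

context metric_sg
begin

sublocale S: comm_monoid_set "opt_add add" None
proof
  fix p q r :: "'m option"
  show "opt_add add (opt_add add p q) r = opt_add add p (opt_add add q r)"
    by (auto simp: opt_add_def add_assoc split: option.splits)
  show "opt_add add p q = opt_add add q p"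
    by (auto simp: opt_add_def add_comm split: option.splits)
  show "opt_add add p None = p"
    by (simp add: opt_add_def split: option.splits)
qed

lemma sgsum_eq_F: "sgsum add g S = the (S.F (\<lambda>z. Some (g z)) S)"
proof -
  have "(\<lambda>z acc. Some (case acc of None \<Rightarrow> g z | Some s \<Rightarrow> add (g z) s))
        = opt_add add \<circ> (\<lambda>z. Some (g z))"
    by (auto simp: opt_add_def fun_eq_iff split: option.splits)
  then show ?thesis unfolding sgsum_def S.eq_fold by simp
qed

lemma F_Some_sgsum:
  "finite S \<Longrightarrow> S \<noteq> {} \<Longrightarrow> S.F (\<lambda>z. Some (g z)) S = Some (sgsum add g S)"
proof (induction S rule: finite_ne_induct)
  case (singleton z)
  then show ?case by (simp add: sgsum_eq_F)
next
  case (insert z S)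
  then show ?case by (simp add: sgsum_eq_F opt_add_def split: option.split)
qed

lemma sgsum_cong: "(\<And>z. z \<in> S \<Longrightarrow> g z = h z) \<Longrightarrow> sgsum add g S = sgsum add h S"
  unfolding sgsum_eq_F by (metis (mono_tags, lifting) S.cong)

lemma sgsum_singleton [simp]: "sgsum add g {z} = g z"
  by (simp add: sgsum_eq_F)

lemma sgsum_reindex: "bij_betw h S T \<Longrightarrow> sgsum add (\<lambda>z. g (h z)) S = sgsum add g T"
  unfolding sgsum_eq_F by (simp add: S.reindex_bij_betw[of h S T "\<lambda>z. Some (g z)"])

lemma sgsum_union:
  assumes "finite S" "finite T" "S \<noteq> {}" "T \<noteq> {}" "S \<inter> T = {}"
  shows "sgsum add g (S \<union> T) = add (sgsum add g S) (sgsum add g T)"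
  using S.union_disjoint[of S T "\<lambda>z. Some (g z)"] assms by (simp add: F_Some_sgsum)

lemma sgsum_Sigma:
  assumes "finite S" "S \<noteq> {}" "\<And>u. u \<in> S \<Longrightarrow> finite (T u) \<and> T u \<noteq> {}"
  shows "sgsum add (\<lambda>u. sgsum add (g u) (T u)) S = sgsum add (\<lambda>(u, t). g u t) (SIGMA u:S. T u)"
proof -
  have fin: "finite (SIGMA u:S. T u)" and ne: "(SIGMA u:S. T u) \<noteq> {}"
    using assms by auto
  have "Some (sgsum add (\<lambda>u. sgsum add (g u) (T u)) S)
        = S.F (\<lambda>u. S.F (\<lambda>t. Some (g u t)) (T u)) S"
    using assms by (simp add: F_Some_sgsum cong: S.cong)
  also have "\<dots> = S.F (\<lambda>(u, t). Some (g u t)) (SIGMA u:S. T u)"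
    using assms by (intro S.Sigma) auto
  also have "\<dots> = Some (sgsum add (\<lambda>(u, t). g u t) (SIGMA u:S. T u))"
    using F_Some_sgsum[OF fin ne, of "\<lambda>(u, t). g u t"] by (simp add: case_prod_beta')
  finally show ?thesis by simp
qed

section \<open>The telescoping inequality\<close>

definition alt_sum :: "(nat set \<Rightarrow> 'm) \<Rightarrow> (nat set \<Rightarrow> 'm) \<Rightarrow> nat set \<Rightarrow> 'm" where
  "alt_sum e p C = sgsum add (\<lambda>U. if even (card U) then e U else p U) (Pow C)"

lemma alt_sum_empty [simp]: "alt_sum e p {} = e {}"
  by (simp add: alt_sum_def)

lemma bij_betw_insert_Pow: "c \<notin> D \<Longrightarrow> bij_betw (insert c) (Pow D) (insert c ` Pow D)"
  by (rule inj_on_imp_bij_betw, rule inj_onI) (metis PowD in_mono insert_ident)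

text \<open>Splitting off a new element c: the subsets containing c carry the opposite parity.\<close>
lemma alt_sum_insert:
  assumes "finite D" "c \<notin> D"
  shows "alt_sum e p (insert c D)
         = add (alt_sum e p D) (alt_sum (\<lambda>U. p (insert c U)) (\<lambda>U. e (insert c U)) D)"
proof -
  let ?g = "\<lambda>U. if even (card U) then e U else p U"
  have card_ins: "card (insert c U) = Suc (card U)" if "U \<in> Pow D" for U
  proof -
    have "finite U" "c \<notin> U" using that assms finite_subset by auto
    then show ?thesis by simp
  qed
  have "alt_sum e p (insert c D) = add (sgsum add ?g (Pow D)) (sgsum add ?g (insert c ` Pow D))"
    unfolding alt_sum_def Pow_insert using assms by (intro sgsum_union) auto
  also have "sgsum add ?g (insert c ` Pow D) = sgsum add (\<lambda>U. ?g (insert c U)) (Pow D)"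
    by (rule sgsum_reindex[symmetric, OF bij_betw_insert_Pow[OF assms(2)]])
  also have "\<dots> = alt_sum (\<lambda>U. p (insert c U)) (\<lambda>U. e (insert c U)) D"
    unfolding alt_sum_def by (intro sgsum_cong) (simp add: card_ins)
  finally show ?thesis by (simp add: alt_sum_def)
qed

lemma telescope_step:
  assumes "finite D" "c \<notin> D"
  shows "d (alt_sum (\<lambda>U. e (insert c U)) (\<lambda>U. p (insert c U)) D)
           (alt_sum (\<lambda>U. p (insert c U)) (\<lambda>U. e (insert c U)) D)
         \<le> d (alt_sum e p D) (alt_sum p e D)
           + d (alt_sum e p (insert c D)) (alt_sum p e (insert c D))"
proof -
  let ?X = "alt_sum (\<lambda>U. e (insert c U)) (\<lambda>U. p (insert c U)) D"
  let ?Y = "alt_sum (\<lambda>U. p (insert c U)) (\<lambda>U. e (insert c U)) D"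
  let ?P = "alt_sum e p D" and ?Q = "alt_sum p e D"
  have "d ?X ?Y = d (add ?X (add ?P ?Q)) (add ?Y (add ?P ?Q))"
    by (simp add: d_translate)
  also have "\<dots> = d (add (add ?Q ?X) ?P) (add (add ?P ?Y) ?Q)"
    by (simp only: add_assoc add_comm add_left_commute)
  also have "\<dots> \<le> d (add ?Q ?X) (add ?P ?Y) + d ?P ?Q"
    by (rule d_add_le)
  also have "d (add ?Q ?X) (add ?P ?Y) = d (alt_sum e p (insert c D)) (alt_sum p e (insert c D))"
    unfolding alt_sum_insert[OF assms] by (rule d_sym)
  finally show ?thesis by simp
qed

lemma telescope:
  assumes "finite C0"
  shows "d (e C0) (p C0) \<le> (\<Sum>C\<in>Pow C0. d (alt_sum e p C) (alt_sum p e C))"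
  using assms
proof (induction C0 arbitrary: e p rule: finite_induct)
  case empty
  then show ?case by simp
next
  case (insert c C)
  let ?a = "\<lambda>C. d (alt_sum e p C) (alt_sum p e C)"
  have "d (e (insert c C)) (p (insert c C))
        \<le> (\<Sum>D\<in>Pow C. d (alt_sum (\<lambda>U. e (insert c U)) (\<lambda>U. p (insert c U)) D)
                          (alt_sum (\<lambda>U. p (insert c U)) (\<lambda>U. e (insert c U)) D))"
    using insert.IH[of "\<lambda>U. e (insert c U)" "\<lambda>U. p (insert c U)"] by simp
  also have "\<dots> \<le> (\<Sum>D\<in>Pow C. ?a D + ?a (insert c D))"
    using insert.hyps finite_subset by (intro sum_mono telescope_step) auto
  also have "\<dots> = (\<Sum>D\<in>Pow C. ?a D) + (\<Sum>D\<in>insert c ` Pow C. ?a D)"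
    using sum.reindex_bij_betw[OF bij_betw_insert_Pow[OF insert.hyps(2)], of ?a]
    by (simp add: sum.distrib)
  also have "\<dots> = (\<Sum>D\<in>Pow (insert c C). ?a D)"
    unfolding Pow_insert using insert.hyps by (intro sum.union_disjoint[symmetric]) auto
  finally show ?case .
qed

end

lemma parity_split_bij:
  assumes fin: "finite A" "finite C" and disj: "A \<inter> C = {}"
  shows "bij_betw (\<lambda>(U, T). T \<union> U)
           (SIGMA U:Pow C. {T. T \<subseteq> A \<and> even (card T) = (even (card U) = q)})
           {T'. T' \<subseteq> A \<union> C \<and> even (card T') = q}"
proof -
  have join: "T \<union> U \<subseteq> A \<union> C \<and> even (card (T \<union> U)) = q"
    if "U \<subseteq> C" "T \<subseteq> A" "even (card T) = (even (card U) = q)" for U T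
  proof -
    have "card (T \<union> U) = card T + card U"
      using that disj fin by (intro card_Un_disjoint) (auto intro: finite_subset)
    then show ?thesis using that by auto
  qed
  have split: "T' - A \<in> Pow C \<and> T' \<inter> A \<subseteq> A
               \<and> even (card (T' \<inter> A)) = (even (card (T' - A)) = q)"
    if "T' \<subseteq> A \<union> C" "even (card T') = q" for T'
  proof -
    have "card T' = card (T' \<inter> A) + card (T' - A)"
      using that fin by (metis card_Int_Diff finite_Un finite_subset)
    then show ?thesis using that by auto
  qed
  show ?thesis
    by (rule bij_betw_byWitness[where f'="\<lambda>T'. (T' - A, T' \<inter> A)"])
      (use disj join split in auto)
qed

lemma finite_subsets: "finite X \<Longrightarrow> finite {T. T \<subseteq> X \<and> P T}"
  by (rule finite_subset[of _ "Pow X"]) auto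

lemma parity_subsets_nonempty:
  assumes "finite A" "A \<noteq> {}"
  shows "{T. T \<subseteq> A \<and> even (card T) = q} \<noteq> {}"
proof (cases q)
  case True
  then show ?thesis by (auto intro!: exI[of _ "{}"])
next
  case False
  from assms obtain a0 where "a0 \<in> A" by auto
  with False show ?thesis by (auto intro!: exI[of _ "{a0}"])
qed

section \<open>The mixed differences of the theorem\<close>

locale truncation_setting = metric_sg d add
  for d :: "'m \<Rightarrow> 'm \<Rightarrow> real" and add :: "'m \<Rightarrow> 'm \<Rightarrow> 'm" +
  fixes N A :: "nat set" and a x y :: "nat \<Rightarrow> real" and f :: "(nat \<Rightarrow> real) \<Rightarrow> 'm"
  assumes finite_N: "finite N" and A_sub: "A \<subseteq> N" and A_ne: "A \<noteq> {}"
begin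

definition A' :: "nat set" where "A' = N - A"

definition hybrid :: "nat set \<Rightarrow> nat set \<Rightarrow> 'm" where
  "hybrid T U = f (\<lambda>i\<in>N. if i \<in> A then (if i \<in> T then y i else x i)
                          else (if i \<in> U then x i else a i))"

definition psum :: "bool \<Rightarrow> nat set \<Rightarrow> 'm" where
  "psum q U = sgsum add (\<lambda>T. hybrid T U) {T. T \<subseteq> A \<and> even (card T) = q}"

lemma finite_A: "finite A" and finite_A': "finite A'"
  using A_sub finite_N finite_subset by (auto simp: A'_def)

lemma md_lhs:
  "md d add A (trunc_map N f A x) (trunc_pt A x) (trunc_pt A y) = d (psum True A') (psum False A')"
proof -
  have "trunc_map N f A x (vtx A T (trunc_pt A x) (trunc_pt A y)) = hybrid T A'" for T
    unfolding trunc_map_def vtx_def trunc_pt_def hybrid_def A'_def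
    by (intro arg_cong[where f=f] ext) auto
  then show ?thesis
    unfolding md_def psum_def by simp
qed

lemma vertex_hybrid:
  assumes "C \<subseteq> A'" "T' \<subseteq> A \<union> C"
  shows "trunc_map N f (A \<union> C) a
           (vtx (A \<union> C) T' (trunc_pt (A \<union> C) (vtx N A a x)) (trunc_pt (A \<union> C) (vtx N A x y)))
         = hybrid (T' \<inter> A) (T' - A)"
  unfolding trunc_map_def vtx_def trunc_pt_def hybrid_def
  using assms A_sub by (intro arg_cong[where f=f] ext) (auto simp: A'_def)

lemma vertex_sum_regroup:
  assumes C: "C \<subseteq> A'"
  shows "sgsum add (\<lambda>T'. hybrid (T' \<inter> A) (T' - A)) {T'. T' \<subseteq> A \<union> C \<and> even (card T') = q}
         = sgsum add (\<lambda>U. psum (even (card U) = q) U) (Pow C)"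
proof -
  have finC: "finite C" using C finite_A' finite_subset by blast
  have disj: "A \<inter> C = {}" using C by (auto simp: A'_def)
  let ?T = "\<lambda>U. {T. T \<subseteq> A \<and> even (card T) = (even (card U) = q)}"
  have "sgsum add (\<lambda>U. psum (even (card U) = q) U) (Pow C)
        = sgsum add (\<lambda>(U, T). hybrid T U) (SIGMA U:Pow C. ?T U)"
    unfolding psum_def
    by (intro sgsum_Sigma conjI finite_subsets parity_subsets_nonempty finite_A A_ne) (use finC in auto)
  also have "\<dots> = sgsum add (\<lambda>z. hybrid (((\<lambda>(U, T). T \<union> U) z) \<inter> A) (((\<lambda>(U, T). T \<union> U) z) - A))
                    (SIGMA U:Pow C. ?T U)"
  proof (rule sgsum_cong)
    fix z assume "z \<in> (SIGMA U:Pow C. ?T U)"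
    then obtain U T where z: "z = (U, T)" "U \<subseteq> C" "T \<subseteq> A" by auto
    then have "(T \<union> U) \<inter> A = T" "(T \<union> U) - A = U" using disj by auto
    with z show "(\<lambda>(U, T). hybrid T U) z
                 = hybrid (((\<lambda>(U, T). T \<union> U) z) \<inter> A) (((\<lambda>(U, T). T \<union> U) z) - A)"
      by simp
  qed
  also have "\<dots> = sgsum add (\<lambda>T'. hybrid (T' \<inter> A) (T' - A)) {T'. T' \<subseteq> A \<union> C \<and> even (card T') = q}"
    by (rule sgsum_reindex[OF parity_split_bij[OF finite_A finC disj]])
  finally show ?thesis by simp
qed

lemma md_summand:
  assumes C: "C \<subseteq> A'"
  shows "md d add (A \<union> C) (trunc_map N f (A \<union> C) a)
           (trunc_pt (A \<union> C) (vtx N A a x)) (trunc_pt (A \<union> C) (vtx N A x y))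
         = d (alt_sum (psum True) (psum False) C) (alt_sum (psum False) (psum True) C)"
proof -
  have vertex_sum: "sgsum add (\<lambda>T'. trunc_map N f (A \<union> C) a
           (vtx (A \<union> C) T' (trunc_pt (A \<union> C) (vtx N A a x)) (trunc_pt (A \<union> C) (vtx N A x y))))
           {T'. T' \<subseteq> A \<union> C \<and> even (card T') = q}
         = alt_sum (psum q) (psum (\<not> q)) C" for q
  proof -
    have "sgsum add (\<lambda>T'. trunc_map N f (A \<union> C) a
           (vtx (A \<union> C) T' (trunc_pt (A \<union> C) (vtx N A a x)) (trunc_pt (A \<union> C) (vtx N A x y))))
           {T'. T' \<subseteq> A \<union> C \<and> even (card T') = q}
          = sgsum add (\<lambda>T'. hybrid (T' \<inter> A) (T' - A)) {T'. T' \<subseteq> A \<union> C \<and> even (card T') = q}"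
      by (rule sgsum_cong) (simp add: vertex_hybrid[OF C])
    also have "\<dots> = sgsum add (\<lambda>U. psum (even (card U) = q) U) (Pow C)"
      by (rule vertex_sum_regroup[OF C])
    also have "\<dots> = alt_sum (psum q) (psum (\<not> q)) C"
      unfolding alt_sum_def by (rule sgsum_cong) auto
    finally show ?thesis .
  qed
  show ?thesis
    unfolding md_def using vertex_sum[of True] vertex_sum[of False] by simp
qed

lemma sum_supersets:
  "(\<Sum>B\<in>{B. A \<subseteq> B \<and> B \<subseteq> N}. g B) = (\<Sum>C\<in>Pow A'. g (A \<union> C))"
proof (rule sum.reindex_cong[where l="\<lambda>C. A \<union> C"])
  show "inj_on (\<lambda>C. A \<union> C) (Pow A')"
    by (rule inj_onI) (auto simp: A'_def)
  show "{B. A \<subseteq> B \<and> B \<subseteq> N} = (\<lambda>C. A \<union> C) ` Pow A'"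
  proof (intro equalityI subsetI)
    fix B assume "B \<in> {B. A \<subseteq> B \<and> B \<subseteq> N}"
    then have "B = A \<union> (B - A)" "B - A \<in> Pow A'" by (auto simp: A'_def)
    then show "B \<in> (\<lambda>C. A \<union> C) ` Pow A'" by blast
  qed (use A_sub in \<open>auto simp: A'_def\<close>)
qed simp

theorem md_truncation_bound:
  "md d add A (trunc_map N f A x) (trunc_pt A x) (trunc_pt A y)
   \<le> (\<Sum>B\<in>{B. A \<subseteq> B \<and> B \<subseteq> N}.
        md d add B (trunc_map N f B a) (trunc_pt B (vtx N A a x)) (trunc_pt B (vtx N A x y)))"
proof -
  have "md d add A (trunc_map N f A x) (trunc_pt A x) (trunc_pt A y) = d (psum True A') (psum False A')"
    by (rule md_lhs)
  also have "\<dots> \<le> (\<Sum>C\<in>Pow A'. d (alt_sum (psum True) (psum False) C) (alt_sum (psum False) (psum True) C))"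
    by (rule telescope[OF finite_A'])
  also have "\<dots> = (\<Sum>C\<in>Pow A'. md d add (A \<union> C) (trunc_map N f (A \<union> C) a)
                     (trunc_pt (A \<union> C) (vtx N A a x)) (trunc_pt (A \<union> C) (vtx N A x y)))"
    by (intro sum.cong refl md_summand[symmetric]) auto
  also have "\<dots> = (\<Sum>B\<in>{B. A \<subseteq> B \<and> B \<subseteq> N}.
                   md d add B (trunc_map N f B a) (trunc_pt B (vtx N A a x)) (trunc_pt B (vtx N A x y)))"
    by (rule sum_supersets[symmetric])
  finally show ?thesis .
qed

end

theorem lemma2:
  fixes n :: nat and a b x y :: "nat \<Rightarrow> real"
    and d :: "'m \<Rightarrow> 'm \<Rightarrow> real" and add :: "'m \<Rightarrow> 'm \<Rightarrow> 'm"
    and f :: "(nat \<Rightarrow> real) \<Rightarrow> 'm" and A :: "nat set"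
  assumes "metric_semigroup d add"
    and "\<forall>i<n. a i < b i"
    and "A \<subseteq> {..<n}" and "A \<noteq> {}"
    and "x \<in> rect {..<n} a b" and "y \<in> rect {..<n} a b"
    and "\<forall>i<n. x i \<le> y i"
  shows "md d add A (trunc_map {..<n} f A x) (trunc_pt A x) (trunc_pt A y)
    \<le> (\<Sum>B\<in>{B. A \<subseteq> B \<and> B \<subseteq> {..<n}}.
         md d add B (trunc_map {..<n} f B a)
           (trunc_pt B (vtx {..<n} A a x)) (trunc_pt B (vtx {..<n} A x y)))"
proof -
  interpret truncation_setting d add "{..<n}" A a x y f
    by unfold_locales (use assms(1,3,4) in auto)
  show ?thesis by (rule md_truncation_bound)
qed

end
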